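(* Let $m\geq 0$, $n\geq 1$, and let $\lambda$ be a partition of $n$ with $m$-Durfee rectangle symbol $(\alpha,\beta)_{(m+j)\times j}$. Then $\operatorname{rank}(\lambda)\geq -m+1$ if and only if either $j=0$, or $j\geq 1$ and $\ell(\beta)+1\leq \ell(\alpha)$.
   Context: For a partition $\lambda=(\lambda_1\geq\lambda_2\geq\cdots)$, $\ell(\lambda)$ is its number of parts and $\operatorname{rank}(\lambda)=\lambda_1-\ell(\lambda)$. The $m$-Durfee rectangle symbol of $\lambda$ is defined as follows. - If $\ell(\lambda)>m$, let $j\geq1$ be the largest integer with $\lambda_{m+j}\geq j$; this gives the $(m+j)\times j$ rectangle (with $m+j$ rows and $j$ columns) in the Ferrers diagram. Then $\alpha=(\alpha_1,\ldots,\alpha_s)$ is the partition formed by the columns to the right of the rectangle within the first $m+j$ rows: $\alpha_i$ is the number of $k\leq m+j$ with $\lambda_k\geq j+i$. Also $\beta=(\beta_1,\ldots,\beta_t)=(\lambda_{m+j+1},\lambda_{m+j+2},\ldots)$ consists of the rows below the rectangle. Thus $m+j\geq\alpha_1\geq\cdots\geq\alpha_s$, $j\geq\beta_1\geq\cdots\geq\beta_t$, and $n=j(m+j)+\sum\alpha_i+\sum\beta_i$. - If $\ell(\lambda)\leq m$, one sets $j=0$, $\alpha=\lambda'$ (the conjugate of $\lambda$) and $\beta=\emptyset$. The symbol is written $(\alpha,\beta)_{(m+j)\times j}$, and $\ell(\alpha),\ell(\beta)$ denote the numbers of parts of $\alpha$ and $\beta$. *)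

theory Defs
  imports Main
begin

definition is_partition_of :: "nat list \<Rightarrow> nat \<Rightarrow> bool" where
  "is_partition_of lam n \<longleftrightarrow> sorted_wrt (\<ge>) lam \<and> (\<forall>x\<in>set lam. 0 < x) \<and> sum_list lam = n"

(* 1-based part lambda_k, with lambda_k = 0 for k > l(lambda) *)
definition part :: "nat list \<Rightarrow> nat \<Rightarrow> nat" where
  "part lam k = (if 1 \<le> k \<and> k \<le> length lam then lam ! (k - 1) else 0)"

definition prank :: "nat list \<Rightarrow> int" where
  "prank lam = int (part lam 1) - int (length lam)"

definition conjugate :: "nat list \<Rightarrow> nat list" where
  "conjugate lam = map (\<lambda>i. card {k. 1 \<le> k \<and> k \<le> length lam \<and> part lam k \<ge> i}) [1..<part lam 1 + 1]"

definition durfee_j :: "nat \<Rightarrow> nat list \<Rightarrow> nat" where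
  "durfee_j m lam = (if length lam \<le> m then 0
      else (GREATEST j. 1 \<le> j \<and> part lam (m + j) \<ge> j))"

(* alpha: columns to the right of the (m+j) x j rectangle in the first m+j rows;
   alpha_i = #{k <= m+j. lambda_k >= j+i}, for i = 1 .. lambda_1 - j (exactly the nonzero ones) *)
definition durfee_alpha :: "nat \<Rightarrow> nat list \<Rightarrow> nat list" where
  "durfee_alpha m lam = (let j = durfee_j m lam in
     if length lam \<le> m then conjugate lam
     else map (\<lambda>i. card {k. 1 \<le> k \<and> k \<le> m + j \<and> part lam k \<ge> j + i}) [1..<part lam 1 - j + 1])"

definition durfee_beta :: "nat \<Rightarrow> nat list \<Rightarrow> nat list" where
  "durfee_beta m lam = (if length lam \<le> m then [] else drop (m + durfee_j m lam) lam)"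

end

theory Submission
  imports Defs
begin

text \<open>Outside the case \<open>j = 0\<close> we have \<open>\<ell>(\<alpha>) = \<lambda>\<^sub>1 - j\<close> and
  \<open>\<ell>(\<beta>) = \<ell>(\<lambda>) - (m + j)\<close> with \<open>j \<le> \<lambda>\<^sub>1\<close> and \<open>m + j \<le> \<ell>(\<lambda>)\<close>, so the condition
  \<open>\<ell>(\<beta>) + 1 \<le> \<ell>(\<alpha>)\<close> is just \<open>\<lambda>\<^sub>1 - \<ell>(\<lambda>) \<ge> 1 - m\<close> with \<open>j\<close> cancelled. When
  \<open>\<ell>(\<lambda>) \<le> m\<close> the rank bound holds trivially since \<open>\<lambda>\<^sub>1 \<ge> 1\<close>.\<close>

lemma part_pos_imp_index_bounds:
  assumes "0 < part lam k"
  shows "1 \<le> k \<and> k \<le> length lam"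
  using assms unfolding part_def by (auto split: if_splits)

lemma part_antimono:
  assumes "sorted_wrt (\<ge>) lam" "1 \<le> i" "i \<le> k"
  shows "part lam k \<le> part lam i"
proof (cases "k \<le> length lam")
  case True
  then have "lam ! (k - 1) \<le> lam ! (i - 1)"
    using assms sorted_wrt_nth_less[OF assms(1), of "i - 1" "k - 1"]
    by (cases "i = k") auto
  then show ?thesis using assms True unfolding part_def by auto
next
  case False
  then show ?thesis unfolding part_def by simp
qed

lemma durfee_j_rectangle:
  assumes pos: "\<forall>x\<in>set lam. 0 < x" and long: "m < length lam"
  shows "1 \<le> durfee_j m lam" and "durfee_j m lam \<le> part lam (m + durfee_j m lam)"
proof -
  define P where "P = (\<lambda>j. 1 \<le> j \<and> j \<le> part lam (m + j))"
  have "P 1"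
    using pos long unfolding P_def part_def by (auto simp: Suc_le_eq)
  moreover have "\<forall>j. P j \<longrightarrow> j \<le> length lam"
    unfolding P_def using part_pos_imp_index_bounds by (metis add_leD2 le_trans less_le_trans zero_less_one)
  ultimately have "P (GREATEST j. P j)"
    by (intro GreatestI_nat[where P = P and b = "length lam"]) auto
  moreover have "durfee_j m lam = (GREATEST j. P j)"
    using long unfolding durfee_j_def P_def by simp
  ultimately show "1 \<le> durfee_j m lam" "durfee_j m lam \<le> part lam (m + durfee_j m lam)"
    unfolding P_def by auto
qed

lemma length_durfee_alpha:
  assumes "m < length lam"
  shows "length (durfee_alpha m lam) = part lam 1 - durfee_j m lam"
  using assms unfolding durfee_alpha_def Let_def by (simp only: not_le[symmetric] if_False length_map length_upt)

lemma length_durfee_beta: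
  assumes "m < length lam"
  shows "length (durfee_beta m lam) = length lam - (m + durfee_j m lam)"
  using assms unfolding durfee_beta_def by simp

theorem proposition2p3:
  fixes m n :: nat and lam :: "nat list"
  assumes "n \<ge> 1" and "is_partition_of lam n"
  shows "prank lam \<ge> - int m + 1 \<longleftrightarrow>
    (durfee_j m lam = 0 \<or>
     (durfee_j m lam \<ge> 1 \<and> length (durfee_beta m lam) + 1 \<le> length (durfee_alpha m lam)))"
proof -
  from assms(2) have sorted: "sorted_wrt (\<ge>) lam" and pos: "\<forall>x\<in>set lam. 0 < x"
    and "sum_list lam = n" unfolding is_partition_of_def by auto
  with assms(1) have "lam \<noteq> []" by auto
  with pos have first_pos: "1 \<le> part lam 1" unfolding part_def by (cases lam) auto
  show ?thesis
  proof (cases "length lam \<le> m")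
    case True
    then show ?thesis using first_pos unfolding prank_def durfee_j_def by simp
  next
    case False
    then have long: "m < length lam" by simp
    define j where "j = durfee_j m lam"
    have j_pos: "1 \<le> j" and j_le: "j \<le> part lam (m + j)"
      using durfee_j_rectangle[OF pos long] unfolding j_def by auto
    have rows: "m + j \<le> length lam"
      using part_pos_imp_index_bounds[of lam "m + j"] j_pos j_le by auto
    have cols: "j \<le> part lam 1"
      using part_antimono[OF sorted, of 1 "m + j"] j_pos j_le by auto
    show ?thesis
      using j_pos rows cols
      unfolding prank_def length_durfee_alpha[OF long] length_durfee_beta[OF long] j_def[symmetric]
      by linarith
  qed
qed

end
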